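(* Let $N,n,q\ge1$ and let $A\in\mathbb{R}^{n\times n}$, $B_v\in\mathbb{R}^{n\times q}$, $G\in\mathbb{R}^{q\times n}$, $B_u\in\mathbb{R}^{n\times1}$, $C\in\mathbb{R}^{1\times n}$. Let $M_0,\dots,M_{q-1}\in\mathbb{R}^{N\times N}$ be simultaneously diagonalized by an invertible $T$, i.e. $T^{-1}M_iT=\Lambda_i=\mathrm{diag}(\lambda_0(M_i),\dots,\lambda_{N-1}(M_i))$ for each $i$. For $i=0,\dots,q-1$ let $\Delta_i\in\mathbb{R}^{q\times q}$ be the matrix with $(i,i)$ entry $1$ and all other entries $0$, and let $M=\sum_{i=0}^{q-1}M_i\otimes\Delta_i\in\mathbb{R}^{Nq\times Nq}$. Then $(T\otimes I_q)^{-1}M(T\otimes I_q)=\sum_{i=0}^{q-1}\Lambda_i\otimes\Delta_i$ is diagonal. Moreover, consider the linear system $$\dot{\tilde x}=\big[(I_N\otimes A)+(I_N\otimes B_v)M(I_N\otimes G)\big]\tilde x+(I_N\otimes B_u)\tilde u,\qquad \tilde y=(I_N\otimes C)\tilde x,$$ with constant input $\tilde u\in\mathbb{R}^N$, and assume $A+\sum_{i=0}^{q-1}\lambda_k(M_i)B_v\Delta_iG$ is invertible for every $k$. Then the steady-state readout $\tilde y^*$ satisfies $T^{-1}\tilde y^*=S\,T^{-1}\tilde u$ where $S$ is diagonal with entries $$[S]_{kk}=-C\Big(A+\sum_{i=0}^{q-1}\lambda_k(M_i)B_v\Delta_iG\Big)^{-1}B_u,\qquad k=0,\dots,N-1.$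$
   Context: $\otimes$ denotes the Kronecker product, $I_m$ the $m\times m$ identity. This describes $N$ identical cells, each with $q$ coupling signals, where signal $i$ is transmitted between cells according to interconnection matrix $M_i$ (the system linearized about a homogeneous steady state). *)

theory Defs
  imports "Jordan_Normal_Form.Matrix"
begin

text \<open>Kronecker product of matrices (row index of A \<otimes> B is i * dim_row B + k).\<close>
definition kron :: "'a::times mat \<Rightarrow> 'a mat \<Rightarrow> 'a mat" where
  "kron A B = mat (dim_row A * dim_row B) (dim_col A * dim_col B)
     (\<lambda>(r, c). A $$ (r div dim_row B, c div dim_col B) * B $$ (r mod dim_row B, c mod dim_col B))"

definition matsum :: "nat \<Rightarrow> nat \<Rightarrow> nat \<Rightarrow> (nat \<Rightarrow> 'a::comm_monoid_add mat) \<Rightarrow> 'a mat" where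
  "matsum nr nc k f = mat nr nc (\<lambda>ij. \<Sum>i<k. f i $$ ij)"

definition mat_inv :: "'a::semiring_1 mat \<Rightarrow> 'a mat" where
  "mat_inv A = (SOME B. inverts_mat A B \<and> inverts_mat B A)"

definition Delta :: "nat \<Rightarrow> nat \<Rightarrow> 'a::{zero,one} mat" where
  "Delta q i = mat q q (\<lambda>(a, b). if a = i \<and> b = i then 1 else 0)"

definition diag_mat :: "nat \<Rightarrow> (nat \<Rightarrow> 'a::zero) \<Rightarrow> 'a mat" where
  "diag_mat N d = mat N N (\<lambda>(a, b). if a = b then d a else 0)"

end

theory Submission
  imports Defs
begin

(*
  Conjugation by T \<otimes> I_q turns each M_i \<otimes> \<Delta>_i into \<Lambda>_i \<otimes> \<Delta>_i, a Kronecker product of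
  diagonal matrices. Since (T \<otimes> I)(I_N \<otimes> X) = T \<otimes> X = (I_N \<otimes> X)(T \<otimes> I), the factors I_N \<otimes> A,
  I_N \<otimes> B_v and I_N \<otimes> G pass through conjugation by T \<otimes> I, so conjugating the system matrix by
  T \<otimes> I_n only replaces M by \<Sigma>_i \<Lambda>_i \<otimes> \<Delta>_i. As the \<Lambda>_i are diagonal, the result is block
  diagonal with k-th block D_k = A + \<Sigma>_i \<lambda>_k(M_i) B_v \<Delta>_i G. Invertibility of the D_k makes the
  system matrix invertible, so the steady state is unique, and in the coordinates T\<^sup>-\<^sup>1 the map
  from input to readout is diagonal with entries -C D_k\<^sup>-\<^sup>1 B_u.
*)

section \<open>Inverses and linear systems\<close>

(* Unlike assoc_mult_mat, the premises contain no dimensions absent from the conclusion, so the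
   simplifier can use this rule to reassociate nested products. *)
lemma assoc_mult_mat_dim:
  fixes A B C :: "'a::semiring_0 mat"
  assumes "dim_col A = dim_row B" "dim_col B = dim_row C"
  shows "A * B * C = A * (B * C)"
proof -
  have "A \<in> carrier_mat (dim_row A) (dim_col A)" "B \<in> carrier_mat (dim_col A) (dim_col B)"
    "C \<in> carrier_mat (dim_col B) (dim_col C)"
    using assms unfolding carrier_mat_def by auto
  then show ?thesis
    by (rule assoc_mult_mat)
qed

lemma assoc_mult_mat_vec_dim:
  fixes A B :: "'a::semiring_0 mat"
  assumes "dim_col A = dim_row B" "dim_col B = dim_vec v"
  shows "(A * B) *\<^sub>v v = A *\<^sub>v (B *\<^sub>v v)"
proof -
  have "A \<in> carrier_mat (dim_row A) (dim_col A)" "B \<in> carrier_mat (dim_col A) (dim_col B)"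
    "v \<in> carrier_vec (dim_col B)"
    using assms unfolding carrier_mat_def carrier_vec_def by auto
  then show ?thesis
    by (rule assoc_mult_mat_vec)
qed

lemma mult_mat_vec_uminus:
  fixes A :: "'a::ring mat"
  assumes "dim_col A = dim_vec v"
  shows "A *\<^sub>v (- v) = - (A *\<^sub>v v)"
  using assms
  by (intro eq_vecI) auto

lemma mat_inv_unique:
  fixes X Y :: "'a::semiring_1 mat"
  assumes X: "X \<in> carrier_mat n n" and Y: "Y \<in> carrier_mat n n"
    and XY: "X * Y = 1\<^sub>m n" and YX: "Y * X = 1\<^sub>m n"
  shows "mat_inv X = Y"
proof -
  let ?B = "mat_inv X"
  have "\<exists>B. inverts_mat X B \<and> inverts_mat B X"
    using X Y XY YX by (auto simp: inverts_mat_def)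
  then have "inverts_mat X ?B \<and> inverts_mat ?B X"
    unfolding mat_inv_def by (rule someI_ex)
  then have XB: "X * ?B = 1\<^sub>m n" and BX: "?B * X = 1\<^sub>m (dim_row ?B)"
    using X by (auto simp: inverts_mat_def)
  have B: "?B \<in> carrier_mat n n"
    using arg_cong[OF XB, of dim_col] arg_cong[OF BX, of dim_col] X by auto
  have "?B = (?B * X) * Y"
    using X Y B XY by (simp add: assoc_mult_mat[of _ n n _ n _ n])
  also have "\<dots> = Y"
    using BX B Y by simp
  finally show ?thesis .
qed

lemma invertible_mat_inv:
  fixes X :: "'a::semiring_1 mat"
  assumes X: "X \<in> carrier_mat n n" and "invertible_mat X"
  shows "mat_inv X \<in> carrier_mat n n" "X * mat_inv X = 1\<^sub>m n" "mat_inv X * X = 1\<^sub>m n"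
proof -
  obtain B where XB: "X * B = 1\<^sub>m n" and BX: "B * X = 1\<^sub>m (dim_row B)"
    using assms unfolding invertible_mat_def inverts_mat_def by auto
  have B: "B \<in> carrier_mat n n"
    using arg_cong[OF XB, of dim_col] arg_cong[OF BX, of dim_col] X by auto
  then have "mat_inv X = B"
    using mat_inv_unique[OF X B XB] BX by simp
  then show "mat_inv X \<in> carrier_mat n n" "X * mat_inv X = 1\<^sub>m n" "mat_inv X * X = 1\<^sub>m n"
    using B XB BX by auto
qed

lemma two_sided_inverse_mat_inv:
  fixes X Y :: "'a::semiring_1 mat"
  assumes "X \<in> carrier_mat n n" "Y \<in> carrier_mat n n" "X * Y = 1\<^sub>m n" "Y * X = 1\<^sub>m n"
  shows "invertible_mat X \<and> mat_inv X = Y"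
  using assms mat_inv_unique[OF assms]
  by (auto simp: invertible_mat_def inverts_mat_def)

lemma mat_inv_conjugate:
  fixes P D :: "'a::semiring_1 mat"
  assumes P: "P \<in> carrier_mat n n" "invertible_mat P" and D: "D \<in> carrier_mat n n" "invertible_mat D"
  shows "invertible_mat (P * D * mat_inv P) \<and> mat_inv (P * D * mat_inv P) = P * mat_inv D * mat_inv P"
proof (rule two_sided_inverse_mat_inv)
  note Pi = invertible_mat_inv[OF P] and Di = invertible_mat_inv[OF D]
  have cancel: "X * (Y * Z) = Z" if "X * Y = 1\<^sub>m n" "X \<in> carrier_mat n n" "Y \<in> carrier_mat n n"
    "Z \<in> carrier_mat n n" for X Y Z :: "'a mat"
    using assoc_mult_mat[OF that(2-4), symmetric] left_mult_one_mat[OF that(4)] that(1) by simp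
  show "P * D * mat_inv P * (P * mat_inv D * mat_inv P) = 1\<^sub>m n"
    using P D Pi Di by (simp add: assoc_mult_mat[of _ n n _ n _ n] cancel)
  show "P * mat_inv D * mat_inv P * (P * D * mat_inv P) = 1\<^sub>m n"
    using P D Pi Di by (simp add: assoc_mult_mat[of _ n n _ n _ n] cancel)
qed (use P D invertible_mat_inv(1)[OF P] invertible_mat_inv(1)[OF D] in auto)

lemma conjugate_by_mat_inv:
  fixes P X :: "'a::semiring_1 mat"
  assumes P: "P \<in> carrier_mat n n" "invertible_mat P" and X: "X \<in> carrier_mat n n"
  shows "X = P * (mat_inv P * X * P) * mat_inv P"
proof -
  note Pi = invertible_mat_inv[OF P]
  have "P * (mat_inv P * X * P) * mat_inv P = (P * mat_inv P) * X * (P * mat_inv P)"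
    using P(1) Pi(1) X by (simp add: assoc_mult_mat_dim carrier_matD)
  then show ?thesis
    using Pi(2) X by simp
qed

lemma mult_mat_vec_add_eq_zero_iff:
  fixes A :: "'a::comm_ring_1 mat"
  assumes A: "A \<in> carrier_mat n n" "invertible_mat A" and b: "b \<in> carrier_vec n" and x: "x \<in> carrier_vec n"
  shows "A *\<^sub>v x + b = 0\<^sub>v n \<longleftrightarrow> x = - (mat_inv A *\<^sub>v b)"
proof -
  note Ai = invertible_mat_inv[OF A]
  have "A *\<^sub>v x + b = 0\<^sub>v n \<longleftrightarrow> A *\<^sub>v x = - b"
    using A x b by (auto simp: vec_eq_iff eq_neg_iff_add_eq_0)
  also have "\<dots> \<longleftrightarrow> x = mat_inv A *\<^sub>v (- b)"
  proof
    assume Ax: "A *\<^sub>v x = - b"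
    have "x = (mat_inv A * A) *\<^sub>v x"
      using Ai(3) x by simp
    also have "\<dots> = mat_inv A *\<^sub>v (A *\<^sub>v x)"
      by (rule assoc_mult_mat_vec[OF Ai(1) A(1) x])
    also have "\<dots> = mat_inv A *\<^sub>v (- b)"
      unfolding Ax ..
    finally show "x = mat_inv A *\<^sub>v (- b)" .
  next
    assume "x = mat_inv A *\<^sub>v (- b)"
    then have "A *\<^sub>v x = (A * mat_inv A) *\<^sub>v (- b)"
      using assoc_mult_mat_vec[OF A(1) Ai(1), of "- b"] b by simp
    then show "A *\<^sub>v x = - b"
      using Ai b by simp
  qed
  also have "mat_inv A *\<^sub>v (- b) = - (mat_inv A *\<^sub>v b)"
    using Ai b by (intro eq_vecI) auto
  finally show ?thesis .
qed

lemma conjugate_steady_state_readout: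
  fixes P D B C R Q :: "'a::comm_ring_1 mat"
  assumes P: "P \<in> carrier_mat m m" "invertible_mat P" and D: "D \<in> carrier_mat m m" "invertible_mat D"
    and B: "B \<in> carrier_mat m p" and C: "C \<in> carrier_mat r m"
    and R: "R \<in> carrier_mat r r" and Q: "Q \<in> carrier_mat p p"
    and B_comm: "mat_inv P * B = B * Q" and C_comm: "R * C * P = C" and u: "u \<in> carrier_vec p"
  shows "R *\<^sub>v (C *\<^sub>v (- (mat_inv (P * D * mat_inv P) *\<^sub>v (B *\<^sub>v u)))) = (- (C * mat_inv D * B)) *\<^sub>v (Q *\<^sub>v u)"
proof -
  let ?X = "mat_inv (P * D * mat_inv P)"
  note Pi = invertible_mat_inv(1)[OF P] and Di = invertible_mat_inv(1)[OF D]
  have X: "?X = P * mat_inv D * mat_inv P"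
    using mat_inv_conjugate[OF P D] by simp
  note dims = P(1)[THEN carrier_matD(1)] P(1)[THEN carrier_matD(2)] Pi[THEN carrier_matD(1)] Pi[THEN carrier_matD(2)]
    Di[THEN carrier_matD(1)] Di[THEN carrier_matD(2)] B[THEN carrier_matD(1)] B[THEN carrier_matD(2)]
    C[THEN carrier_matD(1)] C[THEN carrier_matD(2)] R[THEN carrier_matD(1)] R[THEN carrier_matD(2)]
    Q[THEN carrier_matD(1)] Q[THEN carrier_matD(2)] u[THEN carrier_vecD]
  have "R * C * ?X * B = (R * C * P) * mat_inv D * (mat_inv P * B)"
    unfolding X using dims by (simp add: assoc_mult_mat_dim)
  also have "\<dots> = C * mat_inv D * B * Q"
    unfolding B_comm C_comm using dims by (simp add: assoc_mult_mat_dim)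
  finally have transfer: "R * C * ?X * B = C * mat_inv D * B * Q" .
  have "R *\<^sub>v (C *\<^sub>v (- (?X *\<^sub>v (B *\<^sub>v u)))) = - (R * C * ?X * B) *\<^sub>v u"
    unfolding X using dims by (simp add: assoc_mult_mat_vec_dim mult_mat_vec_uminus)
  also have "\<dots> = (- (C * mat_inv D * B)) *\<^sub>v (Q *\<^sub>v u)"
    unfolding transfer using dims by (simp add: assoc_mult_mat_vec_dim)
  finally show ?thesis .
qed

section \<open>Kronecker products\<close>

lemma sum_lessThan_mult_div_mod:
  "(\<Sum>j<m * n. g (j div n) (j mod n)) = (\<Sum>a<m. \<Sum>b<n. g a (b::nat))"
proof -
  have "(\<Sum>j<m * n. g (j div n) (j mod n)) = (\<Sum>a<m. \<Sum>j\<in>{a * n..<a * n + n}. g (j div n) (j mod n))"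
    by (rule sum.nat_group[symmetric])
  also have "\<dots> = (\<Sum>a<m. \<Sum>b<n. g a b)"
  proof (rule sum.cong[OF refl])
    fix a
    have "(\<Sum>j\<in>{a * n..<a * n + n}. g (j div n) (j mod n))
        = (\<Sum>b\<in>{0..<n}. g ((b + a * n) div n) ((b + a * n) mod n))"
      using sum.shift_bounds_nat_ivl[of "\<lambda>j. g (j div n) (j mod n)" 0 "a * n" n] by (simp add: add.commute)
    also have "\<dots> = (\<Sum>b<n. g a b)"
      by (intro sum.cong) auto
    finally show "(\<Sum>j\<in>{a * n..<a * n + n}. g (j div n) (j mod n)) = (\<Sum>b<n. g a b)" .
  qed
  finally show ?thesis .
qed

lemma div_mod_less_of_less_mult: "(i::nat) < a * b \<Longrightarrow> i div b < a \<and> i mod b < b"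
  by (cases "b = 0") (auto simp: less_mult_imp_div_less)

lemma dim_kron [simp]:
  "dim_row (kron A B) = dim_row A * dim_row B" "dim_col (kron A B) = dim_col A * dim_col B"
  by (auto simp: kron_def)

lemma kron_carrier_mat [intro, simp]:
  "A \<in> carrier_mat a1 a2 \<Longrightarrow> B \<in> carrier_mat b1 b2 \<Longrightarrow> kron A B \<in> carrier_mat (a1 * b1) (a2 * b2)"
  unfolding carrier_mat_def by simp

lemma index_kron [simp]:
  "i < dim_row A * dim_row B \<Longrightarrow> j < dim_col A * dim_col B \<Longrightarrow>
   kron A B $$ (i, j) = A $$ (i div dim_row B, j div dim_col B) * B $$ (i mod dim_row B, j mod dim_col B)"
  unfolding kron_def by simp

lemma kron_mult:
  fixes A B C D :: "'a::comm_semiring_1 mat"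
  assumes A: "A \<in> carrier_mat a1 a2" and B: "B \<in> carrier_mat b1 b2"
    and C: "C \<in> carrier_mat a2 a3" and D: "D \<in> carrier_mat b2 b3"
  shows "kron A B * kron C D = kron (A * C) (B * D)"
proof (rule eq_matI)
  fix i j assume "i < dim_row (kron (A * C) (B * D))" and "j < dim_col (kron (A * C) (B * D))"
  then have i: "i < a1 * b1" and j: "j < a3 * b3" using A B C D by auto
  then have bounds: "i div b1 < a1" "j div b3 < a3" "i mod b1 < b1" "j mod b3 < b3"
    using div_mod_less_of_less_mult by auto
  have "(kron A B * kron C D) $$ (i, j) = (\<Sum>k<a2 * b2. kron A B $$ (i, k) * kron C D $$ (k, j))"
    using i j A B C D by (simp add: scalar_prod_def lessThan_atLeast0)
  also have "\<dots> = (\<Sum>k<a2 * b2. (A $$ (i div b1, k div b2) * C $$ (k div b2, j div b3)) *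
      (B $$ (i mod b1, k mod b2) * D $$ (k mod b2, j mod b3)))"
    using i j A B C D by (intro sum.cong refl) (auto simp: ac_simps)
  also have "\<dots> = (\<Sum>x<a2. \<Sum>y<b2. (A $$ (i div b1, x) * C $$ (x, j div b3)) *
      (B $$ (i mod b1, y) * D $$ (y, j mod b3)))"
    by (rule sum_lessThan_mult_div_mod)
  also have "\<dots> = (\<Sum>x<a2. A $$ (i div b1, x) * C $$ (x, j div b3)) *
      (\<Sum>y<b2. B $$ (i mod b1, y) * D $$ (y, j mod b3))"
    by (simp add: sum_product)
  also have "\<dots> = kron (A * C) (B * D) $$ (i, j)"
    using i j bounds A B C D by (simp add: scalar_prod_def lessThan_atLeast0)
  finally show "(kron A B * kron C D) $$ (i, j) = kron (A * C) (B * D) $$ (i, j)" .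
qed (use A B C D in auto)

lemma kron_one_one: "kron (1\<^sub>m a) (1\<^sub>m b) = (1\<^sub>m (a * b) :: 'a::semiring_1 mat)"
proof (rule eq_matI)
  fix i j assume "i < dim_row (1\<^sub>m (a * b) :: 'a mat)" and "j < dim_col (1\<^sub>m (a * b) :: 'a mat)"
  moreover have "i = j \<longleftrightarrow> i div b = j div b \<and> i mod b = j mod b"
    by (metis div_mult_mod_eq)
  ultimately show "kron (1\<^sub>m a) (1\<^sub>m b) $$ (i, j) = (1\<^sub>m (a * b) :: 'a mat) $$ (i, j)"
    using div_mod_less_of_less_mult[of i a b] div_mod_less_of_less_mult[of j a b] by auto
qed auto

lemma kron_one_right: "kron X (1\<^sub>m 1 :: 'a::semiring_1 mat) = X"
  by (rule eq_matI) auto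

lemma kron_one_commute:
  fixes X Y :: "'a::comm_semiring_1 mat"
  assumes "X \<in> carrier_mat m m" "Y \<in> carrier_mat r c"
  shows "kron X (1\<^sub>m r) * kron (1\<^sub>m m) Y = kron (1\<^sub>m m) Y * kron X (1\<^sub>m c)"
  using assms by (simp add: kron_mult[of _ m m _ r r _ m _ c] kron_mult[of _ m m _ r c _ m _ c])

lemma diagonal_mat_kron:
  fixes A B :: "'a::mult_zero mat"
  assumes A: "diagonal_mat A" and B: "diagonal_mat B" "B \<in> carrier_mat b b"
  shows "diagonal_mat (kron A B)"
  unfolding diagonal_mat_def
proof (intro allI impI)
  fix i j assume i: "i < dim_row (kron A B)" and j: "j < dim_col (kron A B)" and "i \<noteq> j"
  then have "i div b \<noteq> j div b \<or> i mod b \<noteq> j mod b"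
    by (metis div_mult_mod_eq)
  then show "kron A B $$ (i, j) = 0"
    using A B i j div_mod_less_of_less_mult[of i "dim_row A" b] div_mod_less_of_less_mult[of j "dim_col A" b]
    by (auto simp: diagonal_mat_def)
qed

lemma invertible_kron_one:
  fixes T :: "'a::comm_semiring_1 mat"
  assumes T: "T \<in> carrier_mat N N" "invertible_mat T"
  shows "invertible_mat (kron T (1\<^sub>m q)) \<and> mat_inv (kron T (1\<^sub>m q)) = kron (mat_inv T) (1\<^sub>m q)"
proof (rule two_sided_inverse_mat_inv)
  note Ti = invertible_mat_inv[OF T]
  show "kron T (1\<^sub>m q) * kron (mat_inv T) (1\<^sub>m q) = 1\<^sub>m (N * q)"
    using T Ti by (simp add: kron_mult[of _ N N _ q q _ N _ q] kron_one_one)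
  show "kron (mat_inv T) (1\<^sub>m q) * kron T (1\<^sub>m q) = 1\<^sub>m (N * q)"
    using T Ti by (simp add: kron_mult[of _ N N _ q q _ N _ q] kron_one_one)
qed (use T invertible_mat_inv(1)[OF T] in auto)

section \<open>Finite sums of matrices\<close>

lemma matsum_carrier_mat [simp]: "matsum nr nc k f \<in> carrier_mat nr nc"
  by (simp add: matsum_def)

lemma dim_matsum [simp]: "dim_row (matsum nr nc k f) = nr" "dim_col (matsum nr nc k f) = nc"
  by (simp_all add: matsum_def)

lemma index_matsum [simp]: "i < nr \<Longrightarrow> j < nc \<Longrightarrow> matsum nr nc k f $$ (i, j) = (\<Sum>s<k. f s $$ (i, j))"
  by (simp add: matsum_def)

lemma matsum_cong: "(\<And>s. s < k \<Longrightarrow> f s = g s) \<Longrightarrow> matsum nr nc k f = matsum nr nc k g"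
  by (rule eq_matI) simp_all

lemma mult_matsum:
  fixes X :: "'a::comm_semiring_1 mat"
  assumes X: "X \<in> carrier_mat a nr" and f: "\<And>s. s < k \<Longrightarrow> f s \<in> carrier_mat nr nc"
  shows "X * matsum nr nc k f = matsum a nc k (\<lambda>s. X * f s)"
proof (rule eq_matI)
  fix i j assume "i < dim_row (matsum a nc k (\<lambda>s. X * f s))" "j < dim_col (matsum a nc k (\<lambda>s. X * f s))"
  then have i: "i < a" and j: "j < nc" by auto
  have dims: "dim_row (f s) = nr" "dim_col (f s) = nc" if "s < k" for s
    using f[OF that] by auto
  have "(X * matsum nr nc k f) $$ (i, j) = (\<Sum>l<nr. X $$ (i, l) * (\<Sum>s<k. f s $$ (l, j)))"
    using i j X by (simp add: scalar_prod_def lessThan_atLeast0)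
  also have "\<dots> = (\<Sum>s<k. \<Sum>l<nr. X $$ (i, l) * f s $$ (l, j))"
    by (simp add: sum_distrib_left sum.swap[of _ "{..<k}"])
  also have "\<dots> = matsum a nc k (\<lambda>s. X * f s) $$ (i, j)"
    using i j X by (auto simp: scalar_prod_def lessThan_atLeast0 dims intro!: sum.cong)
  finally show "(X * matsum nr nc k f) $$ (i, j) = matsum a nc k (\<lambda>s. X * f s) $$ (i, j)" .
qed (use X in auto)

lemma matsum_mult:
  fixes X :: "'a::comm_semiring_1 mat"
  assumes X: "X \<in> carrier_mat nc b" and f: "\<And>s. s < k \<Longrightarrow> f s \<in> carrier_mat nr nc"
  shows "matsum nr nc k f * X = matsum nr b k (\<lambda>s. f s * X)"
proof (rule eq_matI)
  fix i j assume "i < dim_row (matsum nr b k (\<lambda>s. f s * X))" "j < dim_col (matsum nr b k (\<lambda>s. f s * X))"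
  then have i: "i < nr" and j: "j < b" by auto
  have dims: "dim_row (f s) = nr" "dim_col (f s) = nc" if "s < k" for s
    using f[OF that] by auto
  have "(matsum nr nc k f * X) $$ (i, j) = (\<Sum>l<nc. (\<Sum>s<k. f s $$ (i, l)) * X $$ (l, j))"
    using i j X by (simp add: scalar_prod_def lessThan_atLeast0)
  also have "\<dots> = (\<Sum>s<k. \<Sum>l<nc. f s $$ (i, l) * X $$ (l, j))"
    by (simp add: sum_distrib_right sum.swap[of _ "{..<k}"])
  also have "\<dots> = matsum nr b k (\<lambda>s. f s * X) $$ (i, j)"
    using i j X by (auto simp: scalar_prod_def lessThan_atLeast0 dims intro!: sum.cong)
  finally show "(matsum nr nc k f * X) $$ (i, j) = matsum nr b k (\<lambda>s. f s * X) $$ (i, j)" .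
qed (use X in auto)

lemma diagonal_mat_matsum:
  assumes "\<And>s. s < k \<Longrightarrow> f s \<in> carrier_mat nr nc \<and> diagonal_mat (f s)"
  shows "diagonal_mat (matsum nr nc k f)"
proof -
  have "f s $$ (i, j) = 0" if "s < k" "i < nr" "j < nc" "i \<noteq> j" for s i j
    using assms[OF that(1)] that by (auto simp: diagonal_mat_def)
  then show ?thesis
    by (auto simp: diagonal_mat_def intro!: sum.neutral)
qed

lemma kron_one_conjugate_matsum:
  fixes T :: "'a::comm_semiring_1 mat"
  assumes T: "T \<in> carrier_mat N N" "invertible_mat T"
    and X: "\<And>i. i < k \<Longrightarrow> X i \<in> carrier_mat N N" and Y: "\<And>i. i < k \<Longrightarrow> Y i \<in> carrier_mat q q"
  shows "mat_inv (kron T (1\<^sub>m q)) * matsum (N * q) (N * q) k (\<lambda>i. kron (X i) (Y i)) * kron T (1\<^sub>m q)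
    = matsum (N * q) (N * q) k (\<lambda>i. kron (mat_inv T * X i * T) (Y i))"
proof -
  note Ti = invertible_mat_inv[OF T]
  have XY: "kron (X i) (Y i) \<in> carrier_mat (N * q) (N * q)" if "i < k" for i
    using X[OF that] Y[OF that] by simp
  have "kron (mat_inv T) (1\<^sub>m q) * matsum (N * q) (N * q) k (\<lambda>i. kron (X i) (Y i))
      = matsum (N * q) (N * q) k (\<lambda>i. kron (mat_inv T) (1\<^sub>m q) * kron (X i) (Y i))"
    by (rule mult_matsum) (use Ti XY in auto)
  also have "\<dots> * kron T (1\<^sub>m q)
      = matsum (N * q) (N * q) k (\<lambda>i. kron (mat_inv T) (1\<^sub>m q) * kron (X i) (Y i) * kron T (1\<^sub>m q))"
    by (rule matsum_mult) (use T Ti XY in \<open>auto intro: mult_carrier_mat[of _ _ "N * q"]\<close>)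
  also have "\<dots> = matsum (N * q) (N * q) k (\<lambda>i. kron (mat_inv T * X i * T) (Y i))"
  proof (rule matsum_cong)
    fix i assume "i < k"
    then have "X i \<in> carrier_mat N N" "mat_inv T * X i \<in> carrier_mat N N" "Y i \<in> carrier_mat q q"
      using Ti X Y by auto
    then show "kron (mat_inv T) (1\<^sub>m q) * kron (X i) (Y i) * kron T (1\<^sub>m q) = kron (mat_inv T * X i * T) (Y i)"
      using T Ti by (simp add: kron_mult[of _ N N _ q q _ N _ q])
  qed
  finally show ?thesis
    using invertible_kron_one[OF T] by simp
qed

section \<open>Block-diagonal matrices\<close>

definition block_diag :: "nat \<Rightarrow> nat \<Rightarrow> nat \<Rightarrow> (nat \<Rightarrow> 'a::zero mat) \<Rightarrow> 'a mat" where
  "block_diag N r c F = mat (N * r) (N * c)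
     (\<lambda>(i, j). if i div r = j div c then F (i div r) $$ (i mod r, j mod c) else 0)"

lemma block_diag_carrier_mat [simp]: "block_diag N r c F \<in> carrier_mat (N * r) (N * c)"
  by (auto simp: block_diag_def)

lemma dim_block_diag [simp]: "dim_row (block_diag N r c F) = N * r" "dim_col (block_diag N r c F) = N * c"
  by (auto simp: block_diag_def)

lemma index_block_diag:
  "i < N * r \<Longrightarrow> j < N * c \<Longrightarrow>
   block_diag N r c F $$ (i, j) = (if i div r = j div c then F (i div r) $$ (i mod r, j mod c) else 0)"
  by (auto simp: block_diag_def)

lemma block_diag_cong: "(\<And>k. k < N \<Longrightarrow> F k = G k) \<Longrightarrow> block_diag N r c F = block_diag N r c G"
  by (rule eq_matI) (auto simp: index_block_diag dest: div_mod_less_of_less_mult)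

lemma block_diag_mult:
  fixes F G :: "nat \<Rightarrow> 'a::comm_semiring_1 mat"
  assumes F: "\<And>k. k < N \<Longrightarrow> F k \<in> carrier_mat r m" and G: "\<And>k. k < N \<Longrightarrow> G k \<in> carrier_mat m c"
  shows "block_diag N r m F * block_diag N m c G = block_diag N r c (\<lambda>k. F k * G k)"
proof (rule eq_matI)
  fix i j assume "i < dim_row (block_diag N r c (\<lambda>k. F k * G k))" "j < dim_col (block_diag N r c (\<lambda>k. F k * G k))"
  then have i: "i < N * r" and j: "j < N * c" by auto
  then have bounds: "i div r < N" "j div c < N" "i mod r < r" "j mod c < c"
    using div_mod_less_of_less_mult by auto
  have dims: "dim_row (F k) = r" "dim_col (F k) = m" "dim_row (G k) = m" "dim_col (G k) = c" if "k < N" for k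
    using F[OF that] G[OF that] by auto
  let ?h = "\<lambda>a b. if a = i div r \<and> a = j div c then F a $$ (i mod r, b) * G a $$ (b, j mod c) else 0"
  have "(block_diag N r m F * block_diag N m c G) $$ (i, j)
      = (\<Sum>k<N * m. block_diag N r m F $$ (i, k) * block_diag N m c G $$ (k, j))"
    using i j by (simp add: scalar_prod_def lessThan_atLeast0)
  also have "\<dots> = (\<Sum>k<N * m. ?h (k div m) (k mod m))"
    using i j by (intro sum.cong refl) (auto simp: index_block_diag)
  also have "\<dots> = (\<Sum>a<N. \<Sum>b<m. ?h a b)"
    by (rule sum_lessThan_mult_div_mod)
  also have "\<dots> = (\<Sum>b<m. ?h (i div r) b)"
    using bounds by (subst sum.remove[of _ "i div r"]) (auto intro!: sum.neutral)
  also have "\<dots> = block_diag N r c (\<lambda>k. F k * G k) $$ (i, j)"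
    using i j bounds by (auto simp: index_block_diag scalar_prod_def lessThan_atLeast0 dims)
  finally show "(block_diag N r m F * block_diag N m c G) $$ (i, j) = block_diag N r c (\<lambda>k. F k * G k) $$ (i, j)" .
qed auto

lemma block_diag_add:
  fixes F G :: "nat \<Rightarrow> 'a::monoid_add mat"
  assumes "\<And>k. k < N \<Longrightarrow> G k \<in> carrier_mat r c"
  shows "block_diag N r c F + block_diag N r c G = block_diag N r c (\<lambda>k. F k + G k)"
proof -
  have "dim_row (G k) = r" "dim_col (G k) = c" if "k < N" for k
    using assms[OF that] by auto
  then show ?thesis
    by (intro eq_matI) (auto simp: index_block_diag dest!: div_mod_less_of_less_mult)
qed

lemma kron_one_block_diag:
  fixes X :: "'a::semiring_1 mat"
  assumes "X \<in> carrier_mat r c"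
  shows "kron (1\<^sub>m N) X = block_diag N r c (\<lambda>_. X)"
  using assms by (intro eq_matI) (auto simp: index_block_diag dest!: div_mod_less_of_less_mult)

lemma block_diag_one: "block_diag N m m (\<lambda>_. 1\<^sub>m m) = (1\<^sub>m (N * m) :: 'a::semiring_1 mat)"
  by (metis kron_one_block_diag kron_one_one one_carrier_mat)

lemma kron_diagonal_block_diag:
  fixes L X :: "'a::semiring_1 mat"
  assumes "L \<in> carrier_mat N N" "diagonal_mat L" "X \<in> carrier_mat r c"
  shows "kron L X = block_diag N r c (\<lambda>k. L $$ (k, k) \<cdot>\<^sub>m X)"
  using assms by (intro eq_matI) (auto simp: index_block_diag diagonal_mat_def dest!: div_mod_less_of_less_mult)

lemma matsum_block_diag:
  "matsum (N * r) (N * c) q (\<lambda>s. block_diag N r c (F s)) = block_diag N r c (\<lambda>k. matsum r c q (\<lambda>s. F s k))"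
  by (intro eq_matI) (auto simp: index_block_diag dest!: div_mod_less_of_less_mult)

lemma invertible_block_diag:
  fixes F :: "nat \<Rightarrow> 'a::comm_semiring_1 mat"
  assumes "\<And>k. k < N \<Longrightarrow> F k \<in> carrier_mat m m \<and> invertible_mat (F k)"
  shows "invertible_mat (block_diag N m m F) \<and> mat_inv (block_diag N m m F) = block_diag N m m (\<lambda>k. mat_inv (F k))"
proof (rule two_sided_inverse_mat_inv)
  have inv: "mat_inv (F k) \<in> carrier_mat m m" "F k * mat_inv (F k) = 1\<^sub>m m" "mat_inv (F k) * F k = 1\<^sub>m m"
    if "k < N" for k
    using invertible_mat_inv assms[OF that] by auto
  have "block_diag N m m F * block_diag N m m (\<lambda>k. mat_inv (F k)) = block_diag N m m (\<lambda>k. F k * mat_inv (F k))"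
    by (rule block_diag_mult) (use assms inv in auto)
  also have "\<dots> = block_diag N m m (\<lambda>_. 1\<^sub>m m)"
    by (rule block_diag_cong) (use inv in auto)
  finally show "block_diag N m m F * block_diag N m m (\<lambda>k. mat_inv (F k)) = 1\<^sub>m (N * m)"
    by (simp add: block_diag_one)
  have "block_diag N m m (\<lambda>k. mat_inv (F k)) * block_diag N m m F = block_diag N m m (\<lambda>k. mat_inv (F k) * F k)"
    by (rule block_diag_mult) (use assms inv in auto)
  also have "\<dots> = block_diag N m m (\<lambda>_. 1\<^sub>m m)"
    by (rule block_diag_cong) (use inv in auto)
  finally show "block_diag N m m (\<lambda>k. mat_inv (F k)) * block_diag N m m F = 1\<^sub>m (N * m)"
    by (simp add: block_diag_one)
qed auto

lemma block_diag_one_one: "block_diag N 1 1 F = diag_mat N (\<lambda>k. F k $$ (0, 0))"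
  by (intro eq_matI) (auto simp: index_block_diag diag_mat_def)

lemma uminus_diag_mat: "- diag_mat N d = diag_mat N (\<lambda>k. - d k :: 'a::group_add)"
  by (rule eq_matI) (auto simp: diag_mat_def)

lemma kron_one_mult_block_diag_mult_kron_one:
  fixes X Y :: "'a::comm_semiring_1 mat"
  assumes X: "X \<in> carrier_mat r n" and F: "\<And>k. k < N \<Longrightarrow> F k \<in> carrier_mat n m" and Y: "Y \<in> carrier_mat m c"
  shows "kron (1\<^sub>m N) X * block_diag N n m F * kron (1\<^sub>m N) Y = block_diag N r c (\<lambda>k. X * F k * Y)"
proof -
  have "kron (1\<^sub>m N) X * block_diag N n m F = block_diag N r m (\<lambda>k. X * F k)"
    unfolding kron_one_block_diag[OF X] by (rule block_diag_mult) (use X F in auto)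
  also have "\<dots> * block_diag N m c (\<lambda>_. Y) = block_diag N r c (\<lambda>k. X * F k * Y)"
    by (rule block_diag_mult) (use X F Y in auto)
  finally show ?thesis
    unfolding kron_one_block_diag[OF Y] .
qed

section \<open>The coupled system\<close>

lemma diagonal_mat_Delta: "diagonal_mat (Delta q i)"
  by (simp add: diagonal_mat_def Delta_def)

lemma Delta_carrier_mat [simp]: "Delta q i \<in> carrier_mat q q"
  by (simp add: Delta_def)

lemma network_mat_conjugate:
  fixes A Bv G M T :: "'a::comm_semiring_1 mat"
  assumes A: "A \<in> carrier_mat n n" and Bv: "Bv \<in> carrier_mat n q" and G: "G \<in> carrier_mat q n"
    and M: "M \<in> carrier_mat (N * q) (N * q)" and T: "T \<in> carrier_mat N N" "invertible_mat T"
  shows "mat_inv (kron T (1\<^sub>m n)) * (kron (1\<^sub>m N) A + kron (1\<^sub>m N) Bv * M * kron (1\<^sub>m N) G) * kron T (1\<^sub>m n)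
    = kron (1\<^sub>m N) A + kron (1\<^sub>m N) Bv * (mat_inv (kron T (1\<^sub>m q)) * M * kron T (1\<^sub>m q)) * kron (1\<^sub>m N) G"
proof -
  note Ti = invertible_mat_inv[OF T]
  define P Pi Q Qi where "P = kron T (1\<^sub>m n)" "Pi = kron (mat_inv T) (1\<^sub>m n)"
    "Q = kron T (1\<^sub>m q)" "Qi = kron (mat_inv T) (1\<^sub>m q)"
  define IA IB IG where "IA = kron (1\<^sub>m N) A" "IB = kron (1\<^sub>m N) Bv" "IG = kron (1\<^sub>m N) G"
  have carriers: "P \<in> carrier_mat (N * n) (N * n)" "Pi \<in> carrier_mat (N * n) (N * n)"
    "Q \<in> carrier_mat (N * q) (N * q)" "Qi \<in> carrier_mat (N * q) (N * q)"
    "IA \<in> carrier_mat (N * n) (N * n)" "IB \<in> carrier_mat (N * n) (N * q)" "IG \<in> carrier_mat (N * q) (N * n)"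
    using T Ti A Bv G by (auto simp: P_Pi_Q_Qi_def IA_IB_IG_def)
  note dims = carriers[THEN carrier_matD(1)] carriers[THEN carrier_matD(2)]
    M[THEN carrier_matD(1)] M[THEN carrier_matD(2)]
  have PiP: "Pi * P = 1\<^sub>m (N * n)"
    using T Ti by (simp add: P_Pi_Q_Qi_def kron_mult[of _ N N _ n n _ N _ n] kron_one_one)
  have A_comm: "Pi * IA = IA * Pi"
    unfolding P_Pi_Q_Qi_def IA_IB_IG_def by (rule kron_one_commute[OF Ti(1) A])
  have B_comm: "Pi * IB = IB * Qi"
    unfolding P_Pi_Q_Qi_def IA_IB_IG_def by (rule kron_one_commute[OF Ti(1) Bv])
  have G_comm: "IG * P = Q * IG"
    unfolding P_Pi_Q_Qi_def IA_IB_IG_def by (rule kron_one_commute[OF T(1) G, symmetric])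
  have "Pi * (IA + IB * M * IG) * P = Pi * IA * P + Pi * (IB * M * IG) * P"
    using carriers M by (simp add: mult_add_distrib_mat[of Pi "N * n" "N * n"] add_mult_distrib_mat[of _ "N * n" "N * n"])
  also have "\<dots> = (Pi * IA) * P + (Pi * IB) * M * (IG * P)"
    using dims by (simp add: assoc_mult_mat_dim)
  also have "\<dots> = IA * (Pi * P) + IB * (Qi * M * Q) * IG"
    unfolding A_comm B_comm G_comm using dims by (simp add: assoc_mult_mat_dim)
  also have "\<dots> = IA + IB * (Qi * M * Q) * IG"
    using carriers PiP by simp
  finally show ?thesis
    using invertible_kron_one[OF T] by (simp add: P_Pi_Q_Qi_def IA_IB_IG_def)
qed

lemma network_mat_block_diag:
  fixes A Bv G :: "'a::comm_semiring_1 mat"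
  assumes A: "A \<in> carrier_mat n n" and Bv: "Bv \<in> carrier_mat n q" and G: "G \<in> carrier_mat q n"
    and L: "\<And>i. i < k \<Longrightarrow> L i \<in> carrier_mat N N \<and> diagonal_mat (L i)"
    and Y: "\<And>i. i < k \<Longrightarrow> Y i \<in> carrier_mat q q"
  shows "kron (1\<^sub>m N) A + kron (1\<^sub>m N) Bv * matsum (N * q) (N * q) k (\<lambda>i. kron (L i) (Y i)) * kron (1\<^sub>m N) G
    = block_diag N n n (\<lambda>l. A + matsum n n k (\<lambda>i. L i $$ (l, l) \<cdot>\<^sub>m (Bv * Y i * G)))"
proof -
  have BYG: "Bv * Y i * G \<in> carrier_mat n n" if "i < k" for i
    using Bv Y[OF that] G by simp
  have LY: "kron (L i) (Y i) \<in> carrier_mat (N * q) (N * q)" if "i < k" for i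
    using L[OF that] Y[OF that] by simp
  have "kron (1\<^sub>m N) Bv * matsum (N * q) (N * q) k (\<lambda>i. kron (L i) (Y i))
      = matsum (N * n) (N * q) k (\<lambda>i. kron (1\<^sub>m N) Bv * kron (L i) (Y i))"
    by (rule mult_matsum) (use Bv LY in auto)
  also have "\<dots> * kron (1\<^sub>m N) G = matsum (N * n) (N * n) k (\<lambda>i. kron (1\<^sub>m N) Bv * kron (L i) (Y i) * kron (1\<^sub>m N) G)"
    by (rule matsum_mult) (use Bv G LY in \<open>auto intro: mult_carrier_mat[of _ _ "N * q"]\<close>)
  also have "\<dots> = matsum (N * n) (N * n) k (\<lambda>i. block_diag N n n (\<lambda>l. L i $$ (l, l) \<cdot>\<^sub>m (Bv * Y i * G)))"
  proof (rule matsum_cong)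
    fix i assume i: "i < k"
    have Li: "L i \<in> carrier_mat N N" and BY: "Bv * Y i \<in> carrier_mat n q"
      using L[OF i] Bv Y[OF i] by auto
    have "kron (1\<^sub>m N) Bv * kron (L i) (Y i) * kron (1\<^sub>m N) G = kron (L i) (Bv * Y i) * kron (1\<^sub>m N) G"
      using kron_mult[OF one_carrier_mat Bv Li Y[OF i]] Li by simp
    also have "\<dots> = kron (L i) (Bv * Y i * G)"
      using kron_mult[OF Li BY one_carrier_mat G] Li by simp
    finally have "kron (1\<^sub>m N) Bv * kron (L i) (Y i) * kron (1\<^sub>m N) G = kron (L i) (Bv * Y i * G)" .
    then show "kron (1\<^sub>m N) Bv * kron (L i) (Y i) * kron (1\<^sub>m N) G = block_diag N n n (\<lambda>l. L i $$ (l, l) \<cdot>\<^sub>m (Bv * Y i * G))"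
      using L[OF i] BYG[OF i] by (simp add: kron_diagonal_block_diag)
  qed
  also have "\<dots> = block_diag N n n (\<lambda>l. matsum n n k (\<lambda>i. L i $$ (l, l) \<cdot>\<^sub>m (Bv * Y i * G)))"
    by (rule matsum_block_diag)
  finally show ?thesis
    using A by (simp add: kron_one_block_diag block_diag_add)
qed

lemma block_diag_conjugate_steady_state:
  fixes Abar T Bu C :: "'a::comm_ring_1 mat"
  assumes Abar: "Abar \<in> carrier_mat (N * n) (N * n)" and T: "T \<in> carrier_mat N N" "invertible_mat T"
    and conj: "mat_inv (kron T (1\<^sub>m n)) * Abar * kron T (1\<^sub>m n) = block_diag N n n F"
    and F: "\<And>k. k < N \<Longrightarrow> F k \<in> carrier_mat n n \<and> invertible_mat (F k)"
    and Bu: "Bu \<in> carrier_mat n 1" and C: "C \<in> carrier_mat 1 n" and u: "u \<in> carrier_vec N"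
  shows "\<exists>!x. x \<in> carrier_vec (N * n) \<and> Abar *\<^sub>v x + kron (1\<^sub>m N) Bu *\<^sub>v u = 0\<^sub>v (N * n)"
    and "\<And>x. x \<in> carrier_vec (N * n) \<and> Abar *\<^sub>v x + kron (1\<^sub>m N) Bu *\<^sub>v u = 0\<^sub>v (N * n) \<Longrightarrow>
      mat_inv T *\<^sub>v (kron (1\<^sub>m N) C *\<^sub>v x) = diag_mat N (\<lambda>k. - (C * mat_inv (F k) * Bu) $$ (0, 0)) *\<^sub>v (mat_inv T *\<^sub>v u)"
proof -
  define P D where "P = kron T (1\<^sub>m n)" "D = block_diag N n n F"
  note Ti = invertible_mat_inv[OF T]
  have P: "P \<in> carrier_mat (N * n) (N * n)" "invertible_mat P" "mat_inv P = kron (mat_inv T) (1\<^sub>m n)"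
    using T invertible_kron_one[OF T] by (auto simp: P_D_def)
  have D: "D \<in> carrier_mat (N * n) (N * n)" "invertible_mat D" "mat_inv D = block_diag N n n (\<lambda>k. mat_inv (F k))"
    using invertible_block_diag[OF F] by (auto simp: P_D_def)
  have Bbar: "kron (1\<^sub>m N) Bu \<in> carrier_mat (N * n) N" and Cbar: "kron (1\<^sub>m N) C \<in> carrier_mat N (N * n)"
    using kron_carrier_mat[OF one_carrier_mat Bu, of N] kron_carrier_mat[OF one_carrier_mat C, of N] by simp_all
  have Abar_eq: "Abar = P * D * mat_inv P"
    using conjugate_by_mat_inv[OF P(1,2) Abar] conj by (simp add: P_D_def)
  then have Abar_inv: "invertible_mat Abar"
    using mat_inv_conjugate[OF P(1,2) D(1,2)] by simp
  have Bu_u: "kron (1\<^sub>m N) Bu *\<^sub>v u \<in> carrier_vec (N * n)"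
    using Bbar u by simp
  have steady: "x \<in> carrier_vec (N * n) \<and> Abar *\<^sub>v x + kron (1\<^sub>m N) Bu *\<^sub>v u = 0\<^sub>v (N * n)
      \<longleftrightarrow> x = - (mat_inv Abar *\<^sub>v (kron (1\<^sub>m N) Bu *\<^sub>v u))" for x
    using mult_mat_vec_add_eq_zero_iff[OF Abar Abar_inv Bu_u] invertible_mat_inv(1)[OF Abar Abar_inv] Bu_u
    by auto
  then show "\<exists>!x. x \<in> carrier_vec (N * n) \<and> Abar *\<^sub>v x + kron (1\<^sub>m N) Bu *\<^sub>v u = 0\<^sub>v (N * n)"
    by simp
  have Bu_comm: "mat_inv P * kron (1\<^sub>m N) Bu = kron (1\<^sub>m N) Bu * mat_inv T"
    using kron_one_commute[OF Ti(1) Bu, unfolded kron_one_right] by (simp add: P(3))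
  have "mat_inv T * kron (1\<^sub>m N) C = kron (1\<^sub>m N) C * mat_inv P"
    using kron_one_commute[OF Ti(1) C, unfolded kron_one_right] by (simp add: P(3))
  then have C_comm: "mat_inv T * kron (1\<^sub>m N) C * P = kron (1\<^sub>m N) C"
    using Cbar P invertible_mat_inv[OF P(1,2)] right_mult_one_mat[OF Cbar] by simp
  have "kron (1\<^sub>m N) C * mat_inv D * kron (1\<^sub>m N) Bu = diag_mat N (\<lambda>k. (C * mat_inv (F k) * Bu) $$ (0, 0))"
    unfolding D(3) block_diag_one_one[symmetric]
    by (rule kron_one_mult_block_diag_mult_kron_one[OF C _ Bu]) (use F invertible_mat_inv in blast)
  then show "mat_inv T *\<^sub>v (kron (1\<^sub>m N) C *\<^sub>v x) = diag_mat N (\<lambda>k. - (C * mat_inv (F k) * Bu) $$ (0, 0)) *\<^sub>v (mat_inv T *\<^sub>v u)"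
    if "x \<in> carrier_vec (N * n) \<and> Abar *\<^sub>v x + kron (1\<^sub>m N) Bu *\<^sub>v u = 0\<^sub>v (N * n)" for x
    using that steady conjugate_steady_state_readout[OF P(1,2) D(1,2) Bbar Cbar Ti(1) Ti(1) Bu_comm C_comm u]
    by (simp add: Abar_eq uminus_diag_mat)
qed

theorem mainTheorem3:
  fixes N n q :: nat
    and A Bv G Bu C T :: "real mat"
    and Ms :: "nat \<Rightarrow> real mat"
    and u :: "real vec"
  assumes "N \<ge> 1" "n \<ge> 1" "q \<ge> 1"
    and A: "A \<in> carrier_mat n n" and Bv: "Bv \<in> carrier_mat n q"
    and G: "G \<in> carrier_mat q n" and Bu: "Bu \<in> carrier_mat n 1"
    and C: "C \<in> carrier_mat 1 n"
    and Ms: "\<And>i. i < q \<Longrightarrow> Ms i \<in> carrier_mat N N"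
    and T: "T \<in> carrier_mat N N" "invertible_mat T"
    and diag: "\<And>i. i < q \<Longrightarrow> diagonal_mat (mat_inv T * Ms i * T)"
    and u: "u \<in> carrier_vec N"
    and inv: "\<And>k. k < N \<Longrightarrow> invertible_mat
        (A + matsum n n q (\<lambda>i. ((mat_inv T * Ms i * T) $$ (k, k)) \<cdot>\<^sub>m (Bv * Delta q i * G)))"
  shows
    "(let M = matsum (N * q) (N * q) q (\<lambda>i. kron (Ms i) (Delta q i));
          Lam = (\<lambda>i. mat_inv T * Ms i * T);
          TI = kron T (1\<^sub>m q);
          Abar = kron (1\<^sub>m N) A + kron (1\<^sub>m N) Bv * M * kron (1\<^sub>m N) G;
          Bbar = kron (1\<^sub>m N) Bu;
          Cbar = kron (1\<^sub>m N) C;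
          S = diag_mat N (\<lambda>k. - (C * mat_inv (A + matsum n n q
                 (\<lambda>i. (Lam i $$ (k, k)) \<cdot>\<^sub>m (Bv * Delta q i * G))) * Bu) $$ (0, 0))
      in mat_inv TI * M * TI = matsum (N * q) (N * q) q (\<lambda>i. kron (Lam i) (Delta q i))
         \<and> diagonal_mat (mat_inv TI * M * TI)
         \<and> (\<exists>!x. x \<in> carrier_vec (N * n) \<and> Abar *\<^sub>v x + Bbar *\<^sub>v u = 0\<^sub>v (N * n))
         \<and> (\<forall>x. x \<in> carrier_vec (N * n) \<and> Abar *\<^sub>v x + Bbar *\<^sub>v u = 0\<^sub>v (N * n) \<longrightarrow>
              mat_inv T *\<^sub>v (Cbar *\<^sub>v x) = S *\<^sub>v (mat_inv T *\<^sub>v u)))"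
proof -
  define Lam where "Lam i = mat_inv T * Ms i * T" for i
  define M where "M = matsum (N * q) (N * q) q (\<lambda>i. kron (Ms i) (Delta q i))"
  have Lam: "Lam i \<in> carrier_mat N N \<and> diagonal_mat (Lam i)" if "i < q" for i
    using Ms[OF that] invertible_mat_inv(1)[OF T] T diag[OF that] by (simp add: Lam_def)
  have M_conj: "mat_inv (kron T (1\<^sub>m q)) * M * kron T (1\<^sub>m q) = matsum (N * q) (N * q) q (\<lambda>i. kron (Lam i) (Delta q i))"
    unfolding M_def Lam_def by (rule kron_one_conjugate_matsum[OF T Ms]) auto
  have M_diag: "diagonal_mat (matsum (N * q) (N * q) q (\<lambda>i. kron (Lam i) (Delta q i)))"
    using Lam by (intro diagonal_mat_matsum) (auto intro!: diagonal_mat_kron[OF _ diagonal_mat_Delta Delta_carrier_mat])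
  define Abar where "Abar = kron (1\<^sub>m N) A + kron (1\<^sub>m N) Bv * M * kron (1\<^sub>m N) G"
  define Dk where "Dk k = A + matsum n n q (\<lambda>i. Lam i $$ (k, k) \<cdot>\<^sub>m (Bv * Delta q i * G))" for k
  have Abar: "Abar \<in> carrier_mat (N * n) (N * n)"
    using A Bv G unfolding Abar_def M_def by (auto intro!: add_carrier_mat mult_carrier_mat[of _ _ "N * q"])
  have "mat_inv (kron T (1\<^sub>m n)) * Abar * kron T (1\<^sub>m n)
      = kron (1\<^sub>m N) A + kron (1\<^sub>m N) Bv * (mat_inv (kron T (1\<^sub>m q)) * M * kron T (1\<^sub>m q)) * kron (1\<^sub>m N) G"
    unfolding Abar_def by (rule network_mat_conjugate[OF A Bv G _ T]) (simp add: M_def)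
  also have "\<dots> = block_diag N n n Dk"
    unfolding M_conj Dk_def[abs_def] by (rule network_mat_block_diag[OF A Bv G]) (use Lam in auto)
  finally have Abar_conj: "mat_inv (kron T (1\<^sub>m n)) * Abar * kron T (1\<^sub>m n) = block_diag N n n Dk" .
  have Dk: "Dk k \<in> carrier_mat n n \<and> invertible_mat (Dk k)" if "k < N" for k
    using A inv[OF that] by (simp add: Dk_def Lam_def)
  show ?thesis
    using M_conj M_diag block_diag_conjugate_steady_state[OF Abar T Abar_conj Dk Bu C u]
    unfolding Let_def M_def Abar_def Lam_def Dk_def by auto
qed

end
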